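(* Let $\mathcal{H}$ be a complex Hilbert space, $A\in\mathcal{B}(\mathcal{H})$ positive and $S\in\mathcal{B}_A(\mathcal{H})$. Then for every $\theta\in\mathbb{R}$, $$d\omega_A^2(S)\le\omega_A^2\left(e^{i\theta}S+S^{\sharp_A}S\right)+2\|S\|_A^2\left\|\Re_A\left(e^{i\theta}S\right)\right\|_A .$$
   Context: $\mathcal{B}(\mathcal{H})$ denotes the bounded linear operators on $\mathcal{H}$. For positive $A$, $\langle x,z\rangle_A=\langle Ax,z\rangle$ and $\|z\|_A=\|A^{1/2}z\|$. $\mathcal{B}_A(\mathcal{H})$ is the set of $S\in\mathcal{B}(\mathcal{H})$ for which some $R\in\mathcal{B}(\mathcal{H})$ satisfies $AR=S^*A$; for such $S$, $S^{\sharp_A}=A^{\dagger}S^*A$ with $A^\dagger$ the Moore–Penrose inverse of $A$. $\Re_A(T)=\frac{T+T^{\sharp_A}}{2}$. For operators $T$ bounded with respect to $\|\cdot\|_A$: $\|T\|_A=\sup_{\|z\|_A=1}\|Tz\|_A$, $\omega_A(T)=\sup_{\|z\|_A=1}|\langle Tz,z\rangle_A|$, and $d\omega_A(T)=\sup_{\|z\|_A=1}(|\langle Tz,z\rangle_A|^2+\|Tz\|_A^4)^{1/2}$. *)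

theory Defs
  imports "HOL-Analysis.Analysis"
begin

class complex_inner_space = real_normed_vector +
  fixes scaleC :: "complex \<Rightarrow> 'a \<Rightarrow> 'a"
    and cinner :: "'a \<Rightarrow> 'a \<Rightarrow> complex"
  assumes scaleC_add_right: "scaleC a (x + y) = scaleC a x + scaleC a y"
    and scaleC_add_left: "scaleC (a + b) x = scaleC a x + scaleC b x"
    and scaleC_scaleC: "scaleC a (scaleC b x) = scaleC (a * b) x"
    and scaleC_one: "scaleC 1 x = x"
    and scaleR_scaleC: "scaleR r x = scaleC (complex_of_real r) x"
    and cinner_commute: "cinner x y = cnj (cinner y x)"
    and cinner_add_left: "cinner (x + y) z = cinner x z + cinner y z"
    and cinner_scaleC_left: "cinner (scaleC a x) y = a * cinner x y"
    and cinner_ge_zero: "0 \<le> Re (cinner x x)"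
    and cinner_eq_zero_iff: "cinner x x = 0 \<longleftrightarrow> x = 0"
    and norm_eq_sqrt_cinner: "norm x = sqrt (Re (cinner x x))"

class chilbert_space = complex_inner_space + complete_space

definition bounded_op :: "('a::complex_inner_space \<Rightarrow> 'a) \<Rightarrow> bool" where
  "bounded_op T \<longleftrightarrow> bounded_linear T \<and> (\<forall>c x. T (scaleC c x) = scaleC c (T x))"

definition adjoint :: "('a::complex_inner_space \<Rightarrow> 'a) \<Rightarrow> ('a \<Rightarrow> 'a)" where
  "adjoint T = (THE U. \<forall>x y. cinner (T x) y = cinner x (U y))"

definition positive_op :: "('a::complex_inner_space \<Rightarrow> 'a) \<Rightarrow> bool" where
  "positive_op A \<longleftrightarrow> bounded_op A \<and> (\<forall>x. Im (cinner (A x) x) = 0 \<and> 0 \<le> Re (cinner (A x) x))"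

text \<open>B_A(H): operators admitting an A-adjoint.\<close>
definition BA :: "('a::complex_inner_space \<Rightarrow> 'a) \<Rightarrow> ('a \<Rightarrow> 'a) set" where
  "BA A = {S. bounded_op S \<and> (\<exists>R. bounded_op R \<and> A \<circ> R = adjoint S \<circ> A)}"

text \<open>Moore--Penrose inverse of A on its (only relevant) part of the domain, the range of A:
  A^dagger y is the unique preimage of y orthogonal to ker A.\<close>
definition mp_inv :: "('a::complex_inner_space \<Rightarrow> 'a) \<Rightarrow> 'a \<Rightarrow> 'a" where
  "mp_inv A y = (if \<exists>x. A x = y
      then (THE x. A x = y \<and> (\<forall>k. A k = 0 \<longrightarrow> cinner x k = 0)) else 0)"

definition sharpA :: "('a::complex_inner_space \<Rightarrow> 'a) \<Rightarrow> ('a \<Rightarrow> 'a) \<Rightarrow> ('a \<Rightarrow> 'a)" where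
  "sharpA A S = mp_inv A \<circ> adjoint S \<circ> A"

definition ReA :: "('a::complex_inner_space \<Rightarrow> 'a) \<Rightarrow> ('a \<Rightarrow> 'a) \<Rightarrow> ('a \<Rightarrow> 'a)" where
  "ReA A T = (\<lambda>x. scaleR (1/2) (T x + sharpA A T x))"

text \<open>Semi-inner product and seminorm induced by A: ||z||_A = ||A^(1/2) z|| = sqrt <Az,z>.\<close>
definition innerA :: "('a::complex_inner_space \<Rightarrow> 'a) \<Rightarrow> 'a \<Rightarrow> 'a \<Rightarrow> complex" where
  "innerA A x z = cinner (A x) z"

definition normA :: "('a::complex_inner_space \<Rightarrow> 'a) \<Rightarrow> 'a \<Rightarrow> real" where
  "normA A z = sqrt (Re (innerA A z z))"

text \<open>Suprema over the A-unit sphere; all quantities are nonnegative, so 0 is inserted to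
  fix the (degenerate) value when the A-unit sphere is empty (A = 0).\<close>
definition opnormA :: "('a::complex_inner_space \<Rightarrow> 'a) \<Rightarrow> ('a \<Rightarrow> 'a) \<Rightarrow> real" where
  "opnormA A T = Sup (insert 0 {normA A (T z) | z. normA A z = 1})"

definition omegaA :: "('a::complex_inner_space \<Rightarrow> 'a) \<Rightarrow> ('a \<Rightarrow> 'a) \<Rightarrow> real" where
  "omegaA A T = Sup (insert 0 {cmod (innerA A (T z) z) | z. normA A z = 1})"

definition domegaA :: "('a::complex_inner_space \<Rightarrow> 'a) \<Rightarrow> ('a \<Rightarrow> 'a) \<Rightarrow> real" where
  "domegaA A T = Sup (insert 0
     {sqrt ((cmod (innerA A (T z) z))\<^sup>2 + (normA A (T z)) ^ 4) | z. normA A z = 1})"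

end

(*
  For an A-unit vector z put w = e^(i theta) <Sz,z>_A and n = ||Sz||_A^2. Because
  S^#A is an A-adjoint of S, <(e^(i theta) S + S^#A S) z, z>_A = w + n and
  <Re_A(e^(i theta) S) z, z>_A = Re w. Hence
    |<Sz,z>_A|^2 + ||Sz||_A^4 = |w + n|^2 - 2 n Re w
      <= omega_A(e^(i theta) S + S^#A S)^2 + 2 ||S||_A^2 ||Re_A(e^(i theta) S)||_A,
  and taking the supremum over z gives the claim.

  The suprema are only meaningful because operators in B_A(H) are bounded for the
  A-seminorm. This rests on the fact that an A-symmetric operator P satisfies
  ||Px||_A <= ||P|| ||x||_A, obtained by iterating ||Px||_A^2 <= ||x||_A ||P^2 x||_A.
  Identifying S^#A as an A-adjoint needs Hilbert-space adjoints and the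
  Moore-Penrose inverse, both of which come from orthogonal projection onto closed
  subspaces.
*)
theory Submission
  imports Defs
begin

section \<open>Complex inner product spaces\<close>

lemma cnj_mult_self: "cnj z * z = complex_of_real ((cmod z)\<^sup>2)"
  by (subst complex_norm_square) (rule mult.commute)

context complex_inner_space
begin

lemma scaleC_zero_right [simp]: "scaleC a 0 = 0"
  using scaleC_add_right[of a 0 0] by simp

lemma scaleC_scaleR_commute: "scaleC a (scaleR r x) = scaleR r (scaleC a x)"
  by (simp add: scaleR_scaleC scaleC_scaleC mult.commute)

lemma cinner_zero_left [simp]: "cinner 0 y = 0"
  using cinner_add_left[of 0 0 y] by simp

lemma cinner_zero_right [simp]: "cinner x 0 = 0"
  by (subst cinner_commute) simp

lemma cinner_diff_left: "cinner (x - y) z = cinner x z - cinner y z"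
  using cinner_add_left[of "x - y" y z] by (simp add: eq_diff_eq)

lemma cinner_add_right: "cinner x (y + z) = cinner x y + cinner x z"
  by (subst (1 2 3) cinner_commute) (simp add: cinner_add_left)

lemma cinner_diff_right: "cinner x (y - z) = cinner x y - cinner x z"
  by (subst (1 2 3) cinner_commute) (simp add: cinner_diff_left)

lemma cinner_scaleC_right: "cinner x (scaleC a y) = cnj a * cinner x y"
  by (subst (1 2) cinner_commute) (simp add: cinner_scaleC_left)

lemma cinner_self: "cinner x x = complex_of_real ((norm x)\<^sup>2)"
proof -
  have "Im (cinner x x) = 0"
    using arg_cong[OF cinner_commute[of x x], of Im] by simp
  then show ?thesis
    using cinner_ge_zero[of x] by (simp add: norm_eq_sqrt_cinner complex_eq_iff)
qed

lemma power2_norm_eq_cinner: "(norm x)\<^sup>2 = Re (cinner x x)"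
  by (simp add: cinner_self)

lemma norm_scaleC: "norm (scaleC a x) = cmod a * norm x"
proof -
  have "(norm (scaleC a x))\<^sup>2 = Re (cnj a * a * cinner x x)"
    by (simp add: power2_norm_eq_cinner cinner_scaleC_left cinner_scaleC_right mult.assoc)
  also have "\<dots> = (cmod a * norm x)\<^sup>2"
    by (simp only: cnj_mult_self cinner_self of_real_mult[symmetric] Re_complex_of_real
        power_mult_distrib)
  finally show ?thesis
    by (simp add: power2_eq_iff_nonneg)
qed

lemma norm_add_sq: "(norm (x + y))\<^sup>2 = (norm x)\<^sup>2 + (norm y)\<^sup>2 + 2 * Re (cinner x y)"
  using cinner_commute[of y x]
  by (simp add: power2_norm_eq_cinner cinner_add_left cinner_add_right)

lemma norm_diff_sq: "(norm (x - y))\<^sup>2 = (norm x)\<^sup>2 + (norm y)\<^sup>2 - 2 * Re (cinner x y)"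
  using cinner_commute[of y x]
  by (simp add: power2_norm_eq_cinner cinner_diff_left cinner_diff_right)

lemma parallelogram_law: "(norm (x + y))\<^sup>2 + (norm (x - y))\<^sup>2 = 2 * (norm x)\<^sup>2 + 2 * (norm y)\<^sup>2"
  by (simp add: norm_add_sq norm_diff_sq)

end

lemma nonneg_quadratic_imp_le:
  fixes a b d :: real
  assumes nonneg: "\<And>t. 0 \<le> a - 2 * t * b + t\<^sup>2 * b * d" and "0 \<le> b" "0 \<le> d"
  shows "b \<le> a * d"
proof (cases "d = 0")
  case True
  have "b \<le> 0"
  proof (rule ccontr)
    assume "\<not> b \<le> 0"
    then show False
      using nonneg[of "(a + 1) / (2 * b)"] True by (simp add: field_simps)
  qed
  then show ?thesis
    using True by simp
next
  case False
  then have "0 \<le> a - b / d"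
    using nonneg[of "1 / d"] \<open>0 \<le> d\<close> by (simp add: field_simps power2_eq_square)
  then show ?thesis
    using False \<open>0 \<le> d\<close> by (simp add: field_simps)
qed

lemma hermitian_form_Cauchy_Schwarz:
  fixes B :: "'a::complex_inner_space \<Rightarrow> 'a \<Rightarrow> complex"
  assumes herm: "\<And>x y. B x y = cnj (B y x)"
    and add_left: "\<And>x y z. B (x + y) z = B x z + B y z"
    and scaleC_left: "\<And>c x y. B (scaleC c x) y = c * B x y"
    and nonneg: "\<And>x. 0 \<le> Re (B x x)"
  shows "cmod (B x y) \<le> sqrt (Re (B x x)) * sqrt (Re (B y y))"
proof -
  have diff_left: "B (u - v) w = B u w - B v w" for u v w
    using add_left[of "u - v" v w] by simp
  have diff_right: "B w (u - v) = B w u - B w v" for u v w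
    by (subst (1 2 3) herm) (simp add: diff_left)
  have scaleC_right: "B u (scaleC c v) = cnj c * B u v" for c u v
    by (subst (1 2) herm) (simp add: scaleC_left)
  define c where "c = B x y"
  have "0 \<le> Re (B x x) - 2 * t * (cmod c)\<^sup>2 + t\<^sup>2 * (cmod c)\<^sup>2 * Re (B y y)" for t
  proof -
    define z where "z = x - scaleC (complex_of_real t * c) y"
    have "B z z = B x x - complex_of_real (2 * t) * (cnj c * c)
                  + complex_of_real (t\<^sup>2) * (cnj c * c) * B y y"
      using herm[of y x]
      by (simp add: z_def diff_left diff_right scaleC_left scaleC_right c_def algebra_simps
          power2_eq_square)
    then show ?thesis
      using nonneg[of z] by (simp add: cnj_mult_self del: of_real_power)
  qed
  then have "(cmod c)\<^sup>2 \<le> Re (B x x) * Re (B y y)"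
    by (rule nonneg_quadratic_imp_le) (simp_all add: nonneg)
  then show ?thesis
    unfolding c_def by (metis real_sqrt_le_mono real_sqrt_mult real_sqrt_abs abs_norm_cancel)
qed

lemma cinner_Cauchy_Schwarz: "cmod (cinner x y) \<le> norm x * norm y"
  for x y :: "'a::complex_inner_space"
  using hermitian_form_Cauchy_Schwarz[OF cinner_commute cinner_add_left cinner_scaleC_left
      cinner_ge_zero, of x y]
  by (simp add: norm_eq_sqrt_cinner)

section \<open>Orthogonal projection and the Riesz representation\<close>

lemma nearest_point_exists:
  fixes M :: "'a::chilbert_space set"
  assumes "closed M" "convex M" "M \<noteq> {}"
  obtains m where "m \<in> M" "\<And>m'. m' \<in> M \<Longrightarrow> norm (x - m) \<le> norm (x - m')"
proof -
  define D where "D = (\<lambda>m. norm (x - m)) ` M"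
  define d where "d = Inf D"
  have "bdd_below D"
    unfolding D_def by (rule bdd_belowI[of _ 0]) auto
  then have d_le: "d \<le> norm (x - m)" if "m \<in> M" for m
    unfolding d_def D_def using that by (auto intro: cInf_lower)
  have "d \<ge> 0"
    unfolding d_def D_def using \<open>M \<noteq> {}\<close> by (intro cInf_greatest) auto
  have "d \<in> closure D"
    unfolding d_def using \<open>bdd_below D\<close> \<open>M \<noteq> {}\<close> by (simp add: D_def closure_contains_Inf)
  then obtain f where f_in: "\<And>n. f n \<in> D" and f_lim: "f \<longlonglongrightarrow> d"
    unfolding closure_sequential by blast
  have "\<forall>n. \<exists>m. m \<in> M \<and> f n = norm (x - m)"
    using f_in by (auto simp: D_def)
  then have "\<exists>s. \<forall>n. s n \<in> M \<and> f n = norm (x - s n)"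
    by (rule choice)
  then obtain s where s_in: "\<And>n. s n \<in> M" and "f = (\<lambda>n. norm (x - s n))"
    by auto
  with f_lim have s_lim: "(\<lambda>n. norm (x - s n)) \<longlonglongrightarrow> d"
    by simp
  define g where "g n = (norm (x - s n))\<^sup>2 - d\<^sup>2" for n
  have "g \<longlonglongrightarrow> 0"
    unfolding g_def using tendsto_diff[OF tendsto_power[OF s_lim, of 2] tendsto_const[of "d\<^sup>2"]]
    by simp
  \<comment> \<open>the midpoint of s n and s k lies in M, so the parallelogram law bounds their distance\<close>
  have dist_bound: "(norm (s n - s k))\<^sup>2 \<le> 2 * g n + 2 * g k" for n k
  proof -
    have "convex M" by fact
    then have "scaleR (1/2) (s n) + scaleR (1/2) (s k) \<in> M"
      by (rule convexD) (simp_all add: s_in)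
    then have "2 * d \<le> norm (scaleR 2 (x - (scaleR (1/2) (s n) + scaleR (1/2) (s k))))"
      using d_le by simp
    also have "\<dots> = norm ((x - s k) + (x - s n))"
      by (simp add: algebra_simps scaleR_2)
    finally have mid: "(2 * d)\<^sup>2 \<le> (norm ((x - s k) + (x - s n)))\<^sup>2"
      using \<open>d \<ge> 0\<close> by (intro power_mono) auto
    have "(norm (s n - s k))\<^sup>2
        = 2 * (norm (x - s k))\<^sup>2 + 2 * (norm (x - s n))\<^sup>2 - (norm ((x - s k) + (x - s n)))\<^sup>2"
      using parallelogram_law[of "x - s k" "x - s n"] by simp
    also have "\<dots> \<le> 2 * g n + 2 * g k"
      using mid by (simp add: g_def power_mult_distrib)
    finally show ?thesis .
  qed
  have "Cauchy s"
  proof (rule metric_CauchyI)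
    fix e :: real
    assume "0 < e"
    then obtain N where N: "\<And>n. n \<ge> N \<Longrightarrow> norm (g n - 0) < e\<^sup>2 / 4"
      using LIMSEQ_D[OF \<open>g \<longlonglongrightarrow> 0\<close>, of "e\<^sup>2 / 4"] by auto
    have "dist (s n) (s k) < e" if "n \<ge> N" "k \<ge> N" for n k
    proof -
      have "(norm (s n - s k))\<^sup>2 < e\<^sup>2"
        using dist_bound[of n k] N[OF that(1)] N[OF that(2)] by simp
      then show ?thesis
        using \<open>0 < e\<close> by (simp add: dist_norm power_less_imp_less_base)
    qed
    then show "\<exists>N. \<forall>n\<ge>N. \<forall>k\<ge>N. dist (s n) (s k) < e"
      by blast
  qed
  then obtain m where m: "s \<longlonglongrightarrow> m"
    using Cauchy_convergent convergent_def by blast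
  have "m \<in> M"
    using closed_sequentially[OF \<open>closed M\<close> s_in m] .
  moreover have "norm (x - m) = d"
    using LIMSEQ_unique[OF tendsto_norm[OF tendsto_diff[OF tendsto_const m]] s_lim] .
  ultimately show ?thesis
    using that d_le by simp
qed

lemma nearest_point_orthogonal:
  fixes M :: "'a::complex_inner_space set"
  assumes "m \<in> M" "k \<in> M" and nearest: "\<And>m'. m' \<in> M \<Longrightarrow> norm (x - m) \<le> norm (x - m')"
    and add: "\<And>u v. u \<in> M \<Longrightarrow> v \<in> M \<Longrightarrow> u + v \<in> M"
    and scaleC: "\<And>c u. u \<in> M \<Longrightarrow> scaleC c u \<in> M"
  shows "cinner (x - m) k = 0"
proof (cases "k = 0")
  case False
  define c where "c = cinner (x - m) k"
  define t where "t = complex_of_real (1 / (norm k)\<^sup>2) * c"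
  have "norm k > 0"
    using False by simp
  have "norm (x - m) \<le> norm ((x - m) - scaleC t k)"
    using nearest[OF add[OF \<open>m \<in> M\<close> scaleC[OF \<open>k \<in> M\<close>, of t]]] by (simp add: diff_diff_eq)
  then have "(norm (x - m))\<^sup>2 \<le> (norm ((x - m) - scaleC t k))\<^sup>2"
    by (intro power_mono) auto
  also have "\<dots> = (norm (x - m))\<^sup>2 - (cmod c)\<^sup>2 / (norm k)\<^sup>2"
  proof -
    have "cnj t * c = complex_of_real (1 / (norm k)\<^sup>2) * (cnj c * c)"
      by (simp add: t_def)
    then have "Re (cnj t * c) = (cmod c)\<^sup>2 / (norm k)\<^sup>2"
      by (simp only: cnj_mult_self of_real_mult[symmetric] Re_complex_of_real) simp
    moreover have "cmod t = cmod c / (norm k)\<^sup>2"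
      by (simp only: t_def norm_mult norm_of_real) simp
    then have "(cmod t * norm k)\<^sup>2 = (cmod c)\<^sup>2 / (norm k)\<^sup>2"
      using \<open>norm k > 0\<close> by (simp add: field_simps power2_eq_square)
    ultimately show ?thesis
      by (simp add: norm_diff_sq norm_scaleC cinner_scaleC_right c_def)
  qed
  finally have "(cmod c)\<^sup>2 / (norm k)\<^sup>2 \<le> 0"
    by simp
  then show ?thesis
    using \<open>norm k > 0\<close> by (simp add: c_def divide_le_0_iff)
qed simp

lemma orthogonal_projection_exists:
  fixes M :: "'a::chilbert_space set"
  assumes "closed M" "0 \<in> M"
    and add: "\<And>u v. u \<in> M \<Longrightarrow> v \<in> M \<Longrightarrow> u + v \<in> M"
    and scaleC: "\<And>c u. u \<in> M \<Longrightarrow> scaleC c u \<in> M"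
  obtains m where "m \<in> M" "\<And>k. k \<in> M \<Longrightarrow> cinner (x - m) k = 0"
proof -
  have "convex M"
    unfolding convex_def scaleR_scaleC using add scaleC by blast
  then obtain m where m: "m \<in> M" and nearest: "\<And>m'. m' \<in> M \<Longrightarrow> norm (x - m) \<le> norm (x - m')"
    by (rule nearest_point_exists[OF \<open>closed M\<close>]) (use \<open>0 \<in> M\<close> in auto)
  show ?thesis
    using that[OF m] nearest_point_orthogonal[OF m _ nearest add scaleC] by blast
qed

lemma bounded_linear_scaleC: "bounded_linear (scaleC c :: 'a::complex_inner_space \<Rightarrow> 'a)"
  by (rule bounded_linear_intro[of _ "cmod c"])
    (simp_all add: scaleC_add_right scaleC_scaleR_commute norm_scaleC mult.commute)

lemma bounded_linear_cinner_left: "bounded_linear (\<lambda>x::'a::complex_inner_space. cinner x y)"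
  by (rule bounded_linear_intro[of _ "norm y"])
    (simp_all add: cinner_add_left scaleR_scaleC cinner_scaleC_left scaleR_conv_of_real
      cinner_Cauchy_Schwarz)

lemma closed_kernel: "bounded_linear f \<Longrightarrow> closed {x. f x = 0}"
  by (rule closed_Collect_eq) (auto intro: linear_continuous_on continuous_on_const)

lemma Riesz_representation:
  fixes f :: "'a::chilbert_space \<Rightarrow> complex"
  assumes f: "bounded_linear f" and scaleC: "\<And>c x. f (scaleC c x) = c * f x"
  obtains y where "\<And>x. f x = cinner x y"
proof (cases "\<forall>x. f x = 0")
  case True
  then show ?thesis
    using that[of 0] by simp
next
  case False
  then obtain x0 where "f x0 \<noteq> 0"
    by blast
  define M where "M = {x. f x = 0}"
  have "0 \<in> M"
    using scaleC[of 0 0] by (simp add: M_def)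
  obtain m where "m \<in> M" and orth: "\<And>k. k \<in> M \<Longrightarrow> cinner (x0 - m) k = 0"
    by (rule orthogonal_projection_exists[OF closed_kernel[OF f] \<open>0 \<in> M\<close>[unfolded M_def]])
      (auto simp: M_def scaleC linear_simps[OF f])
  define w where "w = x0 - m"
  have "f w = f x0"
    using \<open>m \<in> M\<close> by (simp add: w_def M_def linear_simps[OF f])
  then have "w \<noteq> 0"
    using \<open>f x0 \<noteq> 0\<close> linear_simps(3)[OF f] by auto
  then have "cinner w w \<noteq> 0"
    by (simp add: cinner_eq_zero_iff)
  \<comment> \<open>x minus a multiple of w lies in the kernel, which is orthogonal to w\<close>
  have "f x = cinner x (scaleC (cnj (f w / cinner w w)) w)" for x
  proof -
    have "x - scaleC (f x / f w) w \<in> M"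
      using \<open>f w = f x0\<close> \<open>f x0 \<noteq> 0\<close> by (simp add: M_def linear_simps[OF f] scaleC)
    then have "cinner (x - scaleC (f x / f w) w) w = 0"
      using orth w_def by (subst cinner_commute) simp
    then have "cinner x w - (f x / f w) * cinner w w = 0"
      by (simp add: cinner_diff_left cinner_scaleC_left)
    then show ?thesis
      using \<open>cinner w w \<noteq> 0\<close> \<open>f w = f x0\<close> \<open>f x0 \<noteq> 0\<close>
      by (simp add: cinner_scaleC_right field_simps)
  qed
  then show ?thesis
    by (rule that)
qed

lemma adjoint_eqI:
  fixes T U :: "'a::complex_inner_space \<Rightarrow> 'a"
  assumes "\<And>x y. cinner (T x) y = cinner x (U y)"
  shows "adjoint T = U"
  unfolding adjoint_def
proof (rule the_equality)
  fix V
  assume V: "\<forall>x y. cinner (T x) y = cinner x (V y)"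
  show "V = U"
  proof
    fix y
    have "cinner x (V y - U y) = 0" for x
      using V assms by (simp add: cinner_diff_right)
    from this[of "V y - U y"] show "V y = U y"
      by (simp add: cinner_eq_zero_iff)
  qed
qed (use assms in blast)

lemma cinner_adjoint:
  fixes T :: "'a::chilbert_space \<Rightarrow> 'a"
  assumes "bounded_op T"
  shows "cinner (T x) y = cinner x (adjoint T y)"
proof -
  have T: "bounded_linear T" "\<And>c x. T (scaleC c x) = scaleC c (T x)"
    using assms by (auto simp: bounded_op_def)
  have "\<exists>u. \<forall>x. cinner (T x) y = cinner x u" for y
  proof -
    have "bounded_linear (\<lambda>x. cinner (T x) y)"
      using bounded_linear_compose[OF bounded_linear_cinner_left T(1)] .
    moreover have "cinner (T (scaleC c x)) y = c * cinner (T x) y" for c x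
      by (simp add: T(2) cinner_scaleC_left)
    ultimately obtain u where "\<And>x. cinner (T x) y = cinner x u"
      by (rule Riesz_representation) blast
    then show ?thesis
      by blast
  qed
  then have "\<exists>U. \<forall>y x. cinner (T x) y = cinner x (U y)"
    by (intro choice allI)
  then obtain U where "\<And>x y. cinner (T x) y = cinner x (U y)"
    by blast
  then have "adjoint T = U"
    by (rule adjoint_eqI)
  with \<open>\<And>x y. cinner (T x) y = cinner x (U y)\<close> show ?thesis
    by simp
qed

lemma apply_mp_inv_apply:
  fixes A :: "'a::chilbert_space \<Rightarrow> 'a"
  assumes "bounded_op A"
  shows "A (mp_inv A (A x)) = A x"
proof -
  have A: "bounded_linear A" "\<And>c x. A (scaleC c x) = scaleC c (A x)"
    using assms by (auto simp: bounded_op_def)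
  define K where "K = {k. A k = 0}"
  have "0 \<in> K"
    by (simp add: K_def linear_simps[OF A(1)])
  obtain m where "m \<in> K" and orth: "\<And>k. k \<in> K \<Longrightarrow> cinner (x - m) k = 0"
    by (rule orthogonal_projection_exists[OF closed_kernel[OF A(1)] \<open>0 \<in> K\<close>[unfolded K_def]])
      (auto simp: K_def A(2) linear_simps[OF A(1)])
  define P where "P u \<longleftrightarrow> A u = A x \<and> (\<forall>k. A k = 0 \<longrightarrow> cinner u k = 0)" for u
  have "P (x - m)"
    using \<open>m \<in> K\<close> orth by (simp add: P_def K_def linear_simps[OF A(1)])
  \<comment> \<open>two solutions differ by an element of ker A orthogonal to ker A\<close>
  have "u = x - m" if "P u" for u
  proof -
    have "A (u - (x - m)) = 0"
      using that \<open>P (x - m)\<close> by (simp add: P_def linear_simps[OF A(1)])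
    then have "cinner u (u - (x - m)) = 0" "cinner (x - m) (u - (x - m)) = 0"
      using that \<open>P (x - m)\<close> unfolding P_def by blast+
    then have "cinner (u - (x - m)) (u - (x - m)) = 0"
      by (simp add: cinner_diff_left)
    then show ?thesis
      by (simp add: cinner_eq_zero_iff)
  qed
  with \<open>P (x - m)\<close> have "(THE u. P u) = x - m"
    by (rule the_equality)
  moreover have "\<exists>u. A u = A x"
    by blast
  ultimately have "mp_inv A (A x) = x - m"
    by (simp add: mp_inv_def P_def)
  with \<open>P (x - m)\<close> show ?thesis
    by (simp add: P_def)
qed

lemma bounded_op_scaleC:
  fixes S :: "'a::complex_inner_space \<Rightarrow> 'a"
  assumes "bounded_op S"
  shows "bounded_op (\<lambda>x. scaleC e (S x))"
  using assms bounded_linear_compose[OF bounded_linear_scaleC, of S e]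
  by (simp add: bounded_op_def o_def scaleC_scaleC mult.commute)

section \<open>The semi-inner product of a positive operator\<close>

lemma positive_op_cinner_commute:
  fixes A :: "'a::complex_inner_space \<Rightarrow> 'a"
  assumes "positive_op A"
  shows "cinner (A x) y = cinner x (A y)"
proof -
  have A: "bounded_linear A" "\<And>c x. A (scaleC c x) = scaleC c (A x)"
    and real: "\<And>x. Im (cinner (A x) x) = 0"
    using assms by (auto simp: positive_op_def bounded_op_def)
  define \<alpha> where "\<alpha> = cinner (A x) y"
  define \<beta> where "\<beta> = cinner (A y) x"
  \<comment> \<open>polarization: the quadratic form is real along x + y and x + i y\<close>
  have "cinner (A (x + y)) (x + y) = cinner (A x) x + cinner (A y) y + \<alpha> + \<beta>"
    by (simp add: \<alpha>_def \<beta>_def linear_simps[OF A(1)] cinner_add_left cinner_add_right)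
  then have "Im \<alpha> + Im \<beta> = 0"
    using real[of "x + y"] real[of x] real[of y] by simp
  moreover have "cinner (A (x + scaleC \<i> y)) (x + scaleC \<i> y)
      = cinner (A x) x + cinner (A y) y - \<i> * \<alpha> + \<i> * \<beta>"
    by (simp add: \<alpha>_def \<beta>_def linear_simps[OF A(1)] A(2) cinner_add_left cinner_add_right
        cinner_scaleC_left cinner_scaleC_right algebra_simps)
  then have "Re \<alpha> = Re \<beta>"
    using real[of "x + scaleC \<i> y"] real[of x] real[of y] by simp
  ultimately have "\<alpha> = cnj \<beta>"
    by (simp add: complex_eq_iff)
  then show ?thesis
    by (subst cinner_commute[of x]) (simp add: \<alpha>_def \<beta>_def)
qed

context
  fixes A :: "'a::complex_inner_space \<Rightarrow> 'a"
  assumes pos: "positive_op A"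
begin

lemma positive_op_linear: "bounded_linear A" "A (scaleC c x) = scaleC c (A x)"
  using pos by (auto simp: positive_op_def bounded_op_def)

lemma innerA_self_real: "Im (innerA A x x) = 0" "0 \<le> Re (innerA A x x)"
  using pos by (simp_all add: positive_op_def innerA_def)

lemma power2_normA: "(normA A x)\<^sup>2 = Re (innerA A x x)"
  by (simp add: normA_def innerA_self_real)

lemma innerA_commute: "innerA A x y = cnj (innerA A y x)"
  unfolding innerA_def by (subst cinner_commute) (simp add: positive_op_cinner_commute[OF pos])

lemma innerA_add_left: "innerA A (x + y) z = innerA A x z + innerA A y z"
  by (simp add: innerA_def linear_simps[OF positive_op_linear(1)] cinner_add_left)

lemma innerA_add_right: "innerA A z (x + y) = innerA A z x + innerA A z y"
  by (simp add: innerA_def cinner_add_right)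

lemma innerA_scaleC_left: "innerA A (scaleC c x) y = c * innerA A x y"
  by (simp add: innerA_def positive_op_linear(2) cinner_scaleC_left)

lemma innerA_scaleC_right: "innerA A x (scaleC c y) = cnj c * innerA A x y"
  by (simp add: innerA_def cinner_scaleC_right)

lemma innerA_self: "innerA A x x = complex_of_real ((normA A x)\<^sup>2)"
  by (simp add: power2_normA innerA_self_real complex_eq_iff)

lemma normA_nonneg: "0 \<le> normA A x"
  by (simp add: normA_def innerA_self_real)

lemma innerA_Cauchy_Schwarz: "cmod (innerA A x y) \<le> normA A x * normA A y"
  unfolding normA_def
  by (rule hermitian_form_Cauchy_Schwarz[OF innerA_commute innerA_add_left innerA_scaleC_left])
    (rule innerA_self_real)

lemma innerA_cong:
  assumes "A x = A x'" "A y = A y'"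
  shows "innerA A x y = innerA A x' y'"
proof -
  have "innerA A x y = cinner x' (A y)"
    unfolding innerA_def \<open>A x = A x'\<close> by (rule positive_op_cinner_commute[OF pos])
  also have "\<dots> = innerA A x' y'"
    unfolding innerA_def \<open>A y = A y'\<close> by (rule positive_op_cinner_commute[OF pos, symmetric])
  finally show ?thesis .
qed

lemma normA_cong: "A x = A x' \<Longrightarrow> normA A x = normA A x'"
  unfolding normA_def by (metis innerA_cong)

lemma normA_scaleC: "normA A (scaleC c x) = cmod c * normA A x"
proof -
  have "(normA A (scaleC c x))\<^sup>2 = Re (cnj c * c * innerA A x x)"
    by (simp add: power2_normA innerA_scaleC_left innerA_scaleC_right mult_ac)
  also have "\<dots> = (cmod c * normA A x)\<^sup>2"
    by (simp only: cnj_mult_self innerA_self of_real_mult[symmetric] Re_complex_of_real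
        power_mult_distrib)
  finally show ?thesis
    by (simp add: normA_nonneg power2_eq_iff_nonneg)
qed

lemma normA_triangle: "normA A (x + y) \<le> normA A x + normA A y"
proof -
  have "(normA A (x + y))\<^sup>2 = (normA A x)\<^sup>2 + (normA A y)\<^sup>2 + 2 * Re (innerA A x y)"
    using innerA_commute[of y x] by (simp add: power2_normA innerA_add_left innerA_add_right)
  also have "\<dots> \<le> (normA A x + normA A y)\<^sup>2"
    using complex_Re_le_cmod[of "innerA A x y"] innerA_Cauchy_Schwarz[of x y]
    by (simp add: power2_sum)
  finally show ?thesis
    by (rule power2_le_imp_le) (simp add: normA_nonneg add_nonneg_nonneg)
qed

lemma normA_le_norm: "\<exists>K\<ge>0. \<forall>x. normA A x \<le> K * norm x"
proof -
  obtain K where K: "K > 0" "\<And>x. norm (A x) \<le> norm x * K"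
    using bounded_linear.pos_bounded[OF positive_op_linear(1)] by blast
  have "(normA A x)\<^sup>2 \<le> (sqrt K * norm x)\<^sup>2" for x
  proof -
    have "(normA A x)\<^sup>2 \<le> cmod (cinner (A x) x)"
      using complex_Re_le_cmod[of "cinner (A x) x"] by (simp add: power2_normA innerA_def)
    also have "\<dots> \<le> norm x * K * norm x"
      using order_trans[OF cinner_Cauchy_Schwarz mult_right_mono[OF K(2) norm_ge_zero]] .
    also have "\<dots> = (sqrt K * norm x)\<^sup>2"
      using K(1) by (simp add: power_mult_distrib) (simp add: power2_eq_square mult_ac)
    finally show ?thesis .
  qed
  then have "normA A x \<le> sqrt K * norm x" for x
    by (rule power2_le_imp_le) (use K(1) in simp)
  then show ?thesis
    by (blast intro: real_sqrt_ge_zero less_imp_le[OF K(1)])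
qed

end

section \<open>Operators bounded for the A-seminorm\<close>

definition A_bounded :: "('a::complex_inner_space \<Rightarrow> 'a) \<Rightarrow> ('a \<Rightarrow> 'a) \<Rightarrow> bool" where
  "A_bounded A T \<longleftrightarrow> (\<exists>C\<ge>0. \<forall>x. normA A (T x) \<le> C * normA A x)"

lemma A_boundedI: "0 \<le> C \<Longrightarrow> (\<And>x. normA A (T x) \<le> C * normA A x) \<Longrightarrow> A_bounded A T"
  unfolding A_bounded_def by blast

lemma A_bounded_add:
  assumes "positive_op A" "A_bounded A T" "A_bounded A U"
  shows "A_bounded A (\<lambda>x. T x + U x)"
proof -
  obtain C D where "0 \<le> C" "0 \<le> D"
    and C: "\<And>x. normA A (T x) \<le> C * normA A x" and D: "\<And>x. normA A (U x) \<le> D * normA A x"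
    using assms(2,3) unfolding A_bounded_def by blast
  show ?thesis
  proof (rule A_boundedI)
    show "0 \<le> C + D"
      using \<open>0 \<le> C\<close> \<open>0 \<le> D\<close> by simp
    fix x
    have "normA A (T x + U x) \<le> normA A (T x) + normA A (U x)"
      by (rule normA_triangle[OF assms(1)])
    also have "\<dots> \<le> C * normA A x + D * normA A x"
      using C D by (rule add_mono)
    finally show "normA A (T x + U x) \<le> (C + D) * normA A x"
      by (simp add: distrib_right)
  qed
qed

lemma A_bounded_scaleC:
  assumes "positive_op A" "A_bounded A T"
  shows "A_bounded A (\<lambda>x. scaleC c (T x))"
proof -
  obtain C where "0 \<le> C" and C: "\<And>x. normA A (T x) \<le> C * normA A x"
    using assms(2) unfolding A_bounded_def by blast
  show ?thesis
  proof (rule A_boundedI)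
    show "0 \<le> cmod c * C"
      using \<open>0 \<le> C\<close> by simp
    fix x
    show "normA A (scaleC c (T x)) \<le> (cmod c * C) * normA A x"
      using mult_left_mono[OF C[of x] norm_ge_zero[of c]]
      by (simp add: normA_scaleC[OF assms(1)] mult.assoc)
  qed
qed

lemma A_bounded_comp:
  assumes "A_bounded A T" "A_bounded A U"
  shows "A_bounded A (\<lambda>x. T (U x))"
proof -
  obtain C D where "0 \<le> C" "0 \<le> D"
    and C: "\<And>x. normA A (T x) \<le> C * normA A x" and D: "\<And>x. normA A (U x) \<le> D * normA A x"
    using assms unfolding A_bounded_def by blast
  show ?thesis
  proof (rule A_boundedI)
    show "0 \<le> C * D"
      using \<open>0 \<le> C\<close> \<open>0 \<le> D\<close> by simp
    fix x
    have "normA A (T (U x)) \<le> C * normA A (U x)"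
      by (rule C)
    also have "\<dots> \<le> C * (D * normA A x)"
      using D \<open>0 \<le> C\<close> by (rule mult_left_mono)
    finally show "normA A (T (U x)) \<le> (C * D) * normA A x"
      by (simp add: mult.assoc)
  qed
qed

lemma A_bounded_cong:
  assumes "positive_op A" "\<And>x. A (T x) = A (U x)" "A_bounded A U"
  shows "A_bounded A T"
  using assms(3) unfolding A_bounded_def normA_cong[OF assms(1,2)] .

lemma innerA_funpow_symmetric:
  assumes sym: "\<And>x y. innerA A (P x) y = innerA A x (P y)"
  shows "innerA A ((P ^^ m) x) y = innerA A x ((P ^^ m) y)"
proof (induction m arbitrary: x y)
  case (Suc m)
  have "innerA A ((P ^^ Suc m) x) y = innerA A ((P ^^ m) x) (P y)"
    by (simp add: sym)
  also have "\<dots> = innerA A x ((P ^^ Suc m) y)"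
    by (simp add: Suc.IH funpow_swap1)
  finally show ?case .
qed simp

lemma normA_sq_le_symmetric:
  assumes pos: "positive_op A" and sym: "\<And>x y. innerA A (Q x) y = innerA A x (Q y)"
  shows "(normA A (Q x))\<^sup>2 \<le> normA A x * normA A (Q (Q x))"
proof -
  have "(normA A (Q x))\<^sup>2 = Re (innerA A x (Q (Q x)))"
    by (simp add: power2_normA[OF pos] sym)
  also have "\<dots> \<le> normA A x * normA A (Q (Q x))"
    using complex_Re_le_cmod innerA_Cauchy_Schwarz[OF pos] by (rule order_trans)
  finally show ?thesis .
qed

lemma normA_funpow_pow2_le:
  assumes pos: "positive_op A" and sym: "\<And>x y. innerA A (P x) y = innerA A x (P y)"
  shows "(normA A (P x))^(2^n) * normA A x \<le> normA A ((P ^^ 2^n) x) * (normA A x)^(2^n)"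
proof (induction n)
  case (Suc n)
  define a b c where "a = normA A (P x)" and "b = normA A x" and "c = normA A ((P ^^ 2^n) x)"
  have "a \<ge> 0" "b \<ge> 0"
    by (simp_all add: a_def b_def normA_nonneg[OF pos])
  have "(a^(2^n) * b)\<^sup>2 \<le> (c * b^(2^n))\<^sup>2"
    using Suc.IH \<open>a \<ge> 0\<close> \<open>b \<ge> 0\<close> by (intro power_mono) (simp_all add: a_def b_def c_def)
  then have "a^(2^Suc n) * b\<^sup>2 \<le> c\<^sup>2 * b^(2^Suc n)"
    by (simp add: power_mult_distrib power_mult[symmetric] mult.commute)
  also have "c\<^sup>2 \<le> b * normA A ((P ^^ 2^Suc n) x)"
    using normA_sq_le_symmetric[OF pos innerA_funpow_symmetric[OF sym], of "2^n" x]
    by (simp add: b_def c_def funpow_add mult_2)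
  finally have "a^(2^Suc n) * b * b \<le> normA A ((P ^^ 2^Suc n) x) * b^(2^Suc n) * b"
    using \<open>b \<ge> 0\<close> by (simp add: power2_eq_square mult_ac mult_right_mono)
  then show ?case
    using \<open>b \<ge> 0\<close> by (cases "b = 0") (simp_all add: a_def b_def power_0_left)
qed simp

lemma normA_le_of_symmetric:
  assumes pos: "positive_op A" and sym: "\<And>x y. innerA A (P x) y = innerA A x (P y)"
    and "0 < K" and K: "\<And>x. norm (P x) \<le> K * norm x"
  shows "normA A (P x) \<le> K * normA A x"
proof -
  define a b where "a = normA A (P x)" and "b = normA A x"
  have "a \<ge> 0" "b \<ge> 0"
    by (simp_all add: a_def b_def normA_nonneg[OF pos])
  obtain KA where "KA \<ge> 0" and KA: "\<And>y. normA A y \<le> KA * norm y"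
    using normA_le_norm[OF pos] by blast
  have norm_funpow: "norm ((P ^^ m) y) \<le> K^m * norm y" for m y
  proof (induction m)
    case (Suc m)
    have "norm ((P ^^ Suc m) y) \<le> K * norm ((P ^^ m) y)"
      by (simp add: K)
    also have "\<dots> \<le> K^Suc m * norm y"
      using Suc.IH \<open>0 < K\<close> by (simp add: mult.assoc mult_left_mono)
    finally show ?case .
  qed simp
  show ?thesis
  proof (cases "b = 0")
    case True
    then show ?thesis
      using normA_sq_le_symmetric[OF pos sym, of x] \<open>a \<ge> 0\<close> by (simp add: a_def b_def)
  next
    case False
    with \<open>b \<ge> 0\<close> have "b > 0"
      by simp
    \<comment> \<open>the powers r^(2^n) stay bounded, which forces r <= 1\<close>
    define r where "r = a / (K * b)"
    have r_bound: "r^(2^n) \<le> KA * norm x / b" for n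
    proof -
      have "a^(2^n) * b \<le> normA A ((P ^^ 2^n) x) * b^(2^n)"
        using normA_funpow_pow2_le[OF pos sym] by (simp add: a_def b_def)
      also have "\<dots> \<le> KA * (K^(2^n) * norm x) * b^(2^n)"
        using order_trans[OF KA mult_left_mono[OF norm_funpow[of "2^n" x] \<open>KA \<ge> 0\<close>]]
        by (rule mult_right_mono) (simp add: \<open>b \<ge> 0\<close>)
      finally show ?thesis
        using \<open>b > 0\<close> \<open>0 < K\<close>
        by (simp add: r_def power_divide power_mult_distrib field_simps)
    qed
    have "r \<le> 1"
    proof (rule ccontr)
      assume "\<not> r \<le> 1"
      then obtain n where "KA * norm x / b < r^n"
        using real_arch_pow by fastforce
      also have "\<dots> \<le> r^(2^n)"
        using \<open>\<not> r \<le> 1\<close> by (intro power_increasing) (simp_all add: less_imp_le)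
      finally show False
        using r_bound[of n] by simp
    qed
    then show ?thesis
      using \<open>b > 0\<close> \<open>0 < K\<close> by (simp add: r_def a_def b_def field_simps)
  qed
qed

lemma A_bounded_of_A_adjoint:
  assumes pos: "positive_op A" and "bounded_linear S" "bounded_linear R"
    and adj: "\<And>x y. innerA A (S x) y = innerA A x (R y)"
  shows "A_bounded A S"
proof -
  have adj': "innerA A (R x) y = innerA A x (S y)" for x y
    using adj[of y x] innerA_commute[OF pos] by metis
  obtain K where "K > 0" and K: "\<And>x. norm (R (S x)) \<le> norm x * K"
    using bounded_linear.pos_bounded[OF bounded_linear_compose[OF assms(3,2)]] by blast
  have K': "norm (R (S x)) \<le> K * norm x" for x
    using K[of x] by (simp add: mult.commute)
  have RS: "normA A (R (S x)) \<le> K * normA A x" for x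
    by (rule normA_le_of_symmetric[OF pos _ \<open>K > 0\<close>]) (simp_all add: adj adj' K')
  have "normA A (S x) \<le> sqrt K * normA A x" for x
  proof (rule power2_le_imp_le)
    have "(normA A (S x))\<^sup>2 = Re (innerA A x (R (S x)))"
      by (simp add: power2_normA[OF pos] adj)
    also have "\<dots> \<le> normA A x * normA A (R (S x))"
      using complex_Re_le_cmod innerA_Cauchy_Schwarz[OF pos] by (rule order_trans)
    also have "\<dots> \<le> normA A x * (K * normA A x)"
      using RS normA_nonneg[OF pos] by (rule mult_left_mono)
    also have "\<dots> = (sqrt K * normA A x)\<^sup>2"
      using \<open>K > 0\<close> by (simp add: power_mult_distrib) (simp add: power2_eq_square)
    finally show "(normA A (S x))\<^sup>2 \<le> (sqrt K * normA A x)\<^sup>2" .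
    show "0 \<le> sqrt K * normA A x"
      using \<open>K > 0\<close> normA_nonneg[OF pos] by simp
  qed
  then show ?thesis
    by (rule A_boundedI[rotated]) (use \<open>K > 0\<close> in simp)
qed

section \<open>The A-adjoint\<close>

lemma BA_A_adjointE:
  fixes A S :: "'a::chilbert_space \<Rightarrow> 'a"
  assumes pos: "positive_op A" and "S \<in> BA A"
  obtains R where "bounded_op R" "\<And>x y. innerA A (S x) y = innerA A x (R y)"
    "\<And>y. A (sharpA A S y) = A (R y)"
proof -
  obtain R where S: "bounded_op S" and R: "bounded_op R" and AR: "A \<circ> R = adjoint S \<circ> A"
    using \<open>S \<in> BA A\<close> by (auto simp: BA_def)
  have AR': "adjoint S (A y) = A (R y)" for y
    using fun_cong[OF AR, of y] by simp
  have "innerA A (S x) y = innerA A x (R y)" for x y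
  proof -
    have "innerA A (S x) y = cinner (S x) (A y)"
      unfolding innerA_def by (rule positive_op_cinner_commute[OF pos])
    also have "\<dots> = cinner (A x) (R y)"
      by (simp add: cinner_adjoint[OF S] AR' positive_op_cinner_commute[OF pos])
    finally show ?thesis
      by (simp add: innerA_def)
  qed
  moreover have "A (sharpA A S y) = A (R y)" for y
    using apply_mp_inv_apply[of A "R y"] pos by (simp add: sharpA_def AR' positive_op_def)
  ultimately show ?thesis
    using that R by blast
qed

lemma innerA_sharpA:
  fixes A S :: "'a::chilbert_space \<Rightarrow> 'a"
  assumes pos: "positive_op A" and "S \<in> BA A"
  shows "innerA A (sharpA A S x) y = innerA A x (S y)"
proof -
  obtain R where adj: "\<And>x y. innerA A (S x) y = innerA A x (R y)"
    and sharp: "\<And>y. A (sharpA A S y) = A (R y)"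
    by (rule BA_A_adjointE[OF assms]) blast
  have "innerA A (sharpA A S x) y = innerA A (R x) y"
    using innerA_cong[OF pos sharp refl] .
  also have "\<dots> = innerA A x (S y)"
    using adj[of y x] innerA_commute[OF pos] by metis
  finally show ?thesis .
qed

lemma BA_A_bounded:
  fixes A S :: "'a::chilbert_space \<Rightarrow> 'a"
  assumes pos: "positive_op A" and "S \<in> BA A"
  shows "A_bounded A S" "A_bounded A (sharpA A S)"
proof -
  obtain R where R: "bounded_op R" and adj: "\<And>x y. innerA A (S x) y = innerA A x (R y)"
    and sharp: "\<And>y. A (sharpA A S y) = A (R y)"
    by (rule BA_A_adjointE[OF assms]) blast
  have "bounded_linear S" "bounded_linear R"
    using \<open>S \<in> BA A\<close> R by (auto simp: BA_def bounded_op_def)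
  moreover have "innerA A (R x) y = innerA A x (S y)" for x y
    using adj[of y x] innerA_commute[OF pos] by metis
  ultimately have "A_bounded A S" "A_bounded A R"
    using A_bounded_of_A_adjoint[OF pos] adj by blast+
  then show "A_bounded A S" "A_bounded A (sharpA A S)"
    by (simp_all add: A_bounded_cong[OF pos sharp])
qed

lemma BA_scaleC:
  fixes A S :: "'a::chilbert_space \<Rightarrow> 'a"
  assumes pos: "positive_op A" and "S \<in> BA A"
  shows "(\<lambda>x. scaleC c (S x)) \<in> BA A"
proof -
  obtain R where S: "bounded_op S" and R: "bounded_op R" and AR: "A \<circ> R = adjoint S \<circ> A"
    using \<open>S \<in> BA A\<close> by (auto simp: BA_def)
  have "adjoint (\<lambda>x. scaleC c (S x)) = (\<lambda>y. scaleC (cnj c) (adjoint S y))"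
    by (rule adjoint_eqI) (simp add: cinner_scaleC_left cinner_scaleC_right cinner_adjoint[OF S])
  then have "A \<circ> (\<lambda>y. scaleC (cnj c) (R y)) = adjoint (\<lambda>x. scaleC c (S x)) \<circ> A"
    using AR by (auto simp: fun_eq_iff positive_op_linear(2)[OF pos] dest: fun_cong)
  then show ?thesis
    using bounded_op_scaleC[OF S] bounded_op_scaleC[OF R] by (auto simp: BA_def)
qed

lemma innerA_ReA_self:
  fixes A S :: "'a::chilbert_space \<Rightarrow> 'a"
  assumes pos: "positive_op A" and "S \<in> BA A"
  shows "innerA A (ReA A S z) z = complex_of_real (Re (innerA A (S z) z))"
proof -
  have "innerA A (sharpA A S z) z = cnj (innerA A (S z) z)"
    by (simp add: innerA_sharpA[OF assms] innerA_commute[OF pos, of z])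
  then show ?thesis
    by (simp add: ReA_def scaleR_scaleC innerA_scaleC_left[OF pos] innerA_add_left[OF pos]
        complex_eq_iff)
qed

lemma A_bounded_ReA:
  fixes A S :: "'a::chilbert_space \<Rightarrow> 'a"
  assumes pos: "positive_op A" and "S \<in> BA A"
  shows "A_bounded A (ReA A S)"
  unfolding ReA_def scaleR_scaleC
  using A_bounded_scaleC[OF pos A_bounded_add[OF pos BA_A_bounded[OF assms]]] .

section \<open>Suprema over the A-unit sphere\<close>

lemma le_Sup_insert_zero: "bdd_above X \<Longrightarrow> x \<in> X \<Longrightarrow> x \<le> Sup (insert 0 X)"
  for X :: "real set"
  by (simp add: cSup_upper)

lemma Sup_insert_zero_nonneg: "bdd_above X \<Longrightarrow> 0 \<le> Sup (insert 0 X)"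
  for X :: "real set"
  by (simp add: cSup_upper)

lemma A_bounded_unitE:
  assumes "A_bounded A T"
  obtains C where "\<And>z. normA A z = 1 \<Longrightarrow> normA A (T z) \<le> C"
proof -
  obtain C where "\<And>x. normA A (T x) \<le> C * normA A x"
    using assms by (auto simp: A_bounded_def)
  then show ?thesis
    using that[of C] by (metis mult.right_neutral)
qed

lemma bdd_above_normA_image:
  assumes "A_bounded A T"
  shows "bdd_above {normA A (T z) |z. normA A z = 1}"
proof -
  obtain C where "\<And>z. normA A z = 1 \<Longrightarrow> normA A (T z) \<le> C"
    using assms by (rule A_bounded_unitE) blast
  then show ?thesis
    by (intro bdd_aboveI[of _ C]) auto
qed

lemma normA_le_opnormA: "A_bounded A T \<Longrightarrow> normA A z = 1 \<Longrightarrow> normA A (T z) \<le> opnormA A T"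
  unfolding opnormA_def by (rule le_Sup_insert_zero[OF bdd_above_normA_image]) auto

lemma opnormA_nonneg: "A_bounded A T \<Longrightarrow> 0 \<le> opnormA A T"
  unfolding opnormA_def by (rule Sup_insert_zero_nonneg[OF bdd_above_normA_image])

lemma cmod_innerA_le_omegaA:
  assumes pos: "positive_op A" and "A_bounded A T" "normA A z = 1"
  shows "cmod (innerA A (T z) z) \<le> omegaA A T"
proof -
  obtain C where C: "\<And>y. normA A y = 1 \<Longrightarrow> normA A (T y) \<le> C"
    using \<open>A_bounded A T\<close> by (rule A_bounded_unitE) blast
  have "cmod (innerA A (T y) y) \<le> C" if "normA A y = 1" for y
    using innerA_Cauchy_Schwarz[OF pos, of "T y" y] C[OF that] that by simp
  then have "bdd_above {cmod (innerA A (T y) y) |y. normA A y = 1}"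
    by (intro bdd_aboveI[of _ C]) auto
  then show ?thesis
    unfolding omegaA_def by (rule le_Sup_insert_zero) (use \<open>normA A z = 1\<close> in auto)
qed

lemma domegaA_sq_le:
  assumes bound: "\<And>z. normA A z = 1 \<Longrightarrow> (cmod (innerA A (T z) z))\<^sup>2 + (normA A (T z))^4 \<le> M"
    and "0 \<le> M"
  shows "(domegaA A T)\<^sup>2 \<le> M"
proof -
  have "domegaA A T \<le> sqrt M"
    unfolding domegaA_def using bound \<open>0 \<le> M\<close> by (intro cSup_least) auto
  moreover have "0 \<le> domegaA A T"
    unfolding domegaA_def using bound
    by (intro Sup_insert_zero_nonneg bdd_aboveI[of _ "sqrt M"]) auto
  ultimately show ?thesis
    using \<open>0 \<le> M\<close> by (metis power_mono real_sqrt_pow2)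
qed

lemma cmod_sq_add_sq_le:
  assumes "0 \<le> n"
  shows "(cmod w)\<^sup>2 + n\<^sup>2 \<le> (cmod (w + complex_of_real n))\<^sup>2 + 2 * n * \<bar>Re w\<bar>"
proof -
  have "(cmod (w + complex_of_real n))\<^sup>2 = (cmod w)\<^sup>2 + 2 * n * Re w + n\<^sup>2"
    by (simp add: cmod_power2 power2_sum)
  moreover have "0 \<le> n * (Re w + \<bar>Re w\<bar>)"
    using assms by simp
  ultimately show ?thesis
    by (simp add: algebra_simps)
qed

lemma domegaA_summand_le:
  fixes A S :: "'a::chilbert_space \<Rightarrow> 'a"
  assumes pos: "positive_op A" and "S \<in> BA A" and "cmod e = 1" and "normA A z = 1"
  shows "(cmod (innerA A (S z) z))\<^sup>2 + (normA A (S z))^4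
    \<le> (omegaA A (\<lambda>x. scaleC e (S x) + sharpA A S (S x)))\<^sup>2
       + 2 * (opnormA A S)\<^sup>2 * opnormA A (ReA A (\<lambda>x. scaleC e (S x)))"
proof -
  define T where "T = (\<lambda>x. scaleC e (S x))"
  define V where "V = (\<lambda>x. T x + sharpA A S (S x))"
  define w where "w = e * innerA A (S z) z"
  define n where "n = (normA A (S z))\<^sup>2"
  have "T \<in> BA A"
    unfolding T_def by (rule BA_scaleC[OF pos \<open>S \<in> BA A\<close>])
  note S_bounded = BA_A_bounded[OF pos \<open>S \<in> BA A\<close>]
  have "A_bounded A V"
    unfolding V_def T_def
    using A_bounded_add[OF pos A_bounded_scaleC[OF pos S_bounded(1)]
        A_bounded_comp[OF S_bounded(2,1)]] .
  have "innerA A (V z) z = w + complex_of_real n"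
    by (simp add: V_def T_def w_def n_def innerA_add_left[OF pos] innerA_scaleC_left[OF pos]
        innerA_sharpA[OF pos \<open>S \<in> BA A\<close>] innerA_self[OF pos])
  then have "cmod (w + complex_of_real n) \<le> omegaA A V"
    using cmod_innerA_le_omegaA[OF pos \<open>A_bounded A V\<close> \<open>normA A z = 1\<close>] by simp
  moreover have "n \<le> (opnormA A S)\<^sup>2"
    unfolding n_def using normA_le_opnormA[OF S_bounded(1) \<open>normA A z = 1\<close>]
    by (simp add: normA_nonneg[OF pos] power_mono)
  moreover have "\<bar>Re w\<bar> \<le> opnormA A (ReA A T)"
  proof -
    have "innerA A (ReA A T z) z = complex_of_real (Re w)"
      using innerA_ReA_self[OF pos \<open>T \<in> BA A\<close>, of z]
      by (simp add: T_def w_def innerA_scaleC_left[OF pos])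
    then have "\<bar>Re w\<bar> = cmod (innerA A (ReA A T z) z)"
      by simp
    also have "\<dots> \<le> normA A (ReA A T z)"
      using innerA_Cauchy_Schwarz[OF pos, of "ReA A T z" z] \<open>normA A z = 1\<close> by simp
    also have "\<dots> \<le> opnormA A (ReA A T)"
      by (rule normA_le_opnormA[OF A_bounded_ReA[OF pos \<open>T \<in> BA A\<close>] \<open>normA A z = 1\<close>])
    finally show ?thesis .
  qed
  moreover have "(cmod (innerA A (S z) z))\<^sup>2 + (normA A (S z))^4 = (cmod w)\<^sup>2 + n\<^sup>2"
    by (simp add: w_def n_def norm_mult \<open>cmod e = 1\<close> power_mult[symmetric])
  moreover have "0 \<le> n"
    by (simp add: n_def)
  moreover have "0 \<le> opnormA A (ReA A T)"
    by (rule opnormA_nonneg[OF A_bounded_ReA[OF pos \<open>T \<in> BA A\<close>]])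
  ultimately have "(cmod (innerA A (S z) z))\<^sup>2 + (normA A (S z))^4
      \<le> (omegaA A V)\<^sup>2 + 2 * ((opnormA A S)\<^sup>2 * opnormA A (ReA A T))"
    using cmod_sq_add_sq_le[of n w] power_mono[of "cmod (w + complex_of_real n)" "omegaA A V" 2]
      mult_mono[of n "(opnormA A S)\<^sup>2" "\<bar>Re w\<bar>" "opnormA A (ReA A T)"]
    by (simp add: mult.assoc)
  then show ?thesis
    by (simp add: V_def T_def mult.assoc)
qed

theorem theorem2p13:
  fixes A S :: "'a::chilbert_space \<Rightarrow> 'a" and \<theta> :: real
  assumes "positive_op A" and "S \<in> BA A"
  shows "(domegaA A S)\<^sup>2
    \<le> (omegaA A (\<lambda>x. scaleC (exp (\<i> * complex_of_real \<theta>)) (S x) + sharpA A S (S x)))\<^sup>2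
       + 2 * (opnormA A S)\<^sup>2 * opnormA A (ReA A (\<lambda>x. scaleC (exp (\<i> * complex_of_real \<theta>)) (S x)))"
proof -
  have e: "cmod (exp (\<i> * complex_of_real \<theta>)) = 1"
    by simp
  have "0 \<le> opnormA A (ReA A (\<lambda>x. scaleC (exp (\<i> * complex_of_real \<theta>)) (S x)))"
    by (rule opnormA_nonneg[OF A_bounded_ReA[OF assms(1) BA_scaleC[OF assms]]])
  then show ?thesis
    by (intro domegaA_sq_le[OF domegaA_summand_le[OF assms e]] add_nonneg_nonneg
        mult_nonneg_nonneg) simp_all
qed

end
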